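(* Let $D\subseteq \mathbb{C}^n$ be open and let $\sigma$ be a strictly plurisubharmonic function of class $C^2$ on $D$. For every compact set $L\subset D$ there exists a constant $K_L>0$ such that the following holds: for every integer $d\ge 1$, every nowhere vanishing holomorphic function $G$ defined on a neighborhood of $L$, and every $K\geq K_L$, the function $(z,w)\mapsto(\sigma(z)+K)\, |G(z)|^2|w|^2$ (with $w\in\mathbb{C}^d$, $|w|$ the Euclidean norm) is strictly plurisubharmonic (i.e. its complex Hessian is positive definite) at every point of $L\times(\mathbb{C}^d\setminus \{0\})$. *)

theory Defs
  imports "HOL-Analysis.Analysis"
begin

text \<open>A "coordinate space" is a type 'p of points together with a shift operation
  sh p i c (add the complex number c to the i-th complex coordinate of p)
  and a finite index set I of complex coordinates.\<close>

text \<open>Real directional derivative of f at p along the real direction c (c = 1 gives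
  the partial derivative in x_i, c = i gives the partial derivative in y_i,
  where z_i = x_i + i y_i).\<close>
definition dpart :: "('p \<Rightarrow> 'i \<Rightarrow> complex \<Rightarrow> 'p) \<Rightarrow> ('p \<Rightarrow> real) \<Rightarrow> 'i \<Rightarrow> complex \<Rightarrow> 'p \<Rightarrow> real" where
  "dpart sh f i c p = deriv (\<lambda>t::real. f (sh p i (of_real t * c))) 0"

text \<open>Complex Hessian entry  d^2 f / (dz_j d(conj z_k))  written with Wirtinger
  derivatives d/dz_j = (d/dx_j - i d/dy_j)/2, d/d(conj z_k) = (d/dx_k + i d/dy_k)/2.\<close>
definition cHess :: "('p \<Rightarrow> 'i \<Rightarrow> complex \<Rightarrow> 'p) \<Rightarrow> ('p \<Rightarrow> real) \<Rightarrow> 'i \<Rightarrow> 'i \<Rightarrow> 'p \<Rightarrow> complex" where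
  "cHess sh f j k p =
     (complex_of_real (dpart sh (dpart sh f k 1) j 1 p + dpart sh (dpart sh f k \<i>) j \<i> p)
      + \<i> * complex_of_real (dpart sh (dpart sh f k \<i>) j 1 p - dpart sh (dpart sh f k 1) j \<i> p)) / 4"

definition spsh_at :: "('p \<Rightarrow> 'i \<Rightarrow> complex \<Rightarrow> 'p) \<Rightarrow> 'i set \<Rightarrow> ('p \<Rightarrow> real) \<Rightarrow> 'p \<Rightarrow> bool" where
  "spsh_at sh I f p \<longleftrightarrow>
     (\<forall>v::'i \<Rightarrow> complex. (\<exists>i\<in>I. v i \<noteq> 0) \<longrightarrow>
        (let S = (\<Sum>j\<in>I. \<Sum>k\<in>I. cHess sh f j k p * v j * cnj (v k))
         in Im S = 0 \<and> Re S > 0))"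

definition sh_vec :: "complex ^ 'n \<Rightarrow> 'n \<Rightarrow> complex \<Rightarrow> complex ^ 'n" where
  "sh_vec z j c = z + axis j c"

text \<open>The space C^n x C^d: points (z, w) with w :: nat => complex, of which only the
  coordinates i < d are used; index set Inl ` UNIV \<union> Inr ` {..<d}.\<close>
definition sh_prod :: "(complex ^ 'n) \<times> (nat \<Rightarrow> complex) \<Rightarrow> 'n + nat \<Rightarrow> complex
                        \<Rightarrow> (complex ^ 'n) \<times> (nat \<Rightarrow> complex)" where
  "sh_prod p k c = (case k of
      Inl j \<Rightarrow> (fst p + axis j c, snd p)
    | Inr i \<Rightarrow> (fst p, (snd p)(i := snd p i + c)))"

definition C2_on :: "(complex ^ 'n) set \<Rightarrow> (complex ^ 'n \<Rightarrow> real) \<Rightarrow> bool" where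
  "C2_on D f \<longleftrightarrow> continuous_on D f \<and>
     (\<forall>j c. c \<in> {1, \<i>} \<longrightarrow>
        (\<forall>p\<in>D. (\<lambda>t::real. f (sh_vec p j (of_real t * c))) differentiable (at 0)) \<and>
        continuous_on D (dpart sh_vec f j c) \<and>
        (\<forall>k e. e \<in> {1, \<i>} \<longrightarrow>
           (\<forall>p\<in>D. (\<lambda>t::real. dpart sh_vec f j c (sh_vec p k (of_real t * e))) differentiable (at 0)) \<and>
           continuous_on D (dpart sh_vec (dpart sh_vec f j c) k e)))"

definition holo_on :: "(complex ^ 'n) set \<Rightarrow> (complex ^ 'n \<Rightarrow> complex) \<Rightarrow> bool" where
  "holo_on U G \<longleftrightarrow> (\<forall>z\<in>U. \<exists>G'. (G has_derivative G') (at z) \<and> (\<forall>c v. G' (c *s v) = c * G' v))"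

end

theory Submission
  imports Defs "HOL-Complex_Analysis.Complex_Analysis"
begin

text \<open>Write \<open>A = (\<sigma> + K) |G|\<^sup>2\<close>. On a vector \<open>(\<xi>, \<eta>)\<close> the complex Hessian of \<open>A(z) |w|\<^sup>2\<close> is
  \<open>|w|\<^sup>2 H\<^sub>A(\<xi>) + 2 Re (\<partial>A(\<xi>) \<langle>w, \<eta>\<rangle>) + A |\<eta>|\<^sup>2\<close>, which by Cauchy-Schwarz is positive as soon as
  \<open>|\<partial>A(\<xi>)|\<^sup>2 < A H\<^sub>A(\<xi>)\<close>, i.e. as soon as \<open>log A\<close> is strictly plurisubharmonic.
  As \<open>log |G|\<^sup>2\<close> is pluriharmonic, \<open>A H\<^sub>A - |\<partial>A|\<^sup>2 = |G|\<^sup>4 ((\<sigma> + K) H\<^sub>\<sigma> - |\<partial>\<sigma>|\<^sup>2)\<close>, and since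
  \<open>H\<^sub>\<sigma>\<close> is positive definite and continuous, compactness of \<open>L\<close> times the unit sphere makes this positive
  for all \<open>K \<ge> K\<^sub>L\<close>, independently of \<open>d\<close> and \<open>G\<close>.\<close>

section \<open>Osgood's lemma\<close>

lemma norm_difference_quotient_minus_deriv_le:
  fixes f :: "complex \<Rightarrow> complex"
  assumes r: "r > 0" and cont: "continuous_on (cball 0 r) f" and hol: "f holomorphic_on ball 0 r"
    and bound: "\<And>u. norm u = r \<Longrightarrow> norm (f u) \<le> M"
    and h: "h \<noteq> 0" "norm h < r/2"
  shows "norm ((f h - f 0) / h - deriv f 0) \<le> 2 * M * norm h / r^2"
proof -
  have M: "M \<ge> 0"
    using order_trans[OF norm_ge_zero bound[of "of_real r"]] r by simp
  have ih: "((\<lambda>u. f u / (u - h)) has_contour_integral (2 * pi * \<i> * f h)) (circlepath 0 r)"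
    using Cauchy_integral_circlepath[OF cont hol, of h] h r by simp
  have i0: "((\<lambda>u. f u / (u - 0)) has_contour_integral (2 * pi * \<i> * f 0)) (circlepath 0 r)"
    using Cauchy_integral_circlepath[OF cont hol, of 0] r by simp
  have i1: "((\<lambda>u. f u / (u - 0) ^ Suc 1) has_contour_integral (2 * pi * \<i> * deriv f 0)) (circlepath 0 r)"
    using Cauchy_has_contour_integral_higher_derivative_circlepath[OF cont hol, of 0 1] r by simp
  have "((\<lambda>u. (f u / (u - h) - f u / (u - 0)) / h - f u / (u - 0) ^ Suc 1) has_contour_integral
      (2 * pi * \<i>) * ((f h - f 0) / h - deriv f 0)) (circlepath 0 r)"
    using has_contour_integral_diff[OF has_contour_integral_div[OF has_contour_integral_diff[OF ih i0]] i1]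
    by (simp add: field_simps)
  then have "norm ((2 * pi * \<i>) * ((f h - f 0) / h - deriv f 0)) \<le> (M * norm h / ((r/2) * r^2)) * (2 * pi * r)"
  proof (rule has_contour_integral_bound_circlepath)
    show "0 \<le> M * norm h / ((r/2) * r^2)" using M r by auto
    fix u :: complex assume u: "norm (u - 0) = r"
    have "u \<noteq> 0" "u - h \<noteq> 0" using u h r by auto
    then have "(f u / (u - h) - f u / (u - 0)) / h - f u / (u - 0) ^ Suc 1 = f u * h / ((u - h) * u^2)"
      using h by (simp add: field_simps power2_eq_square)
    also have "norm \<dots> = norm (f u) * norm h / (norm (u - h) * r^2)"
      using u by (simp add: norm_mult norm_divide norm_power)
    also have "\<dots> \<le> M * norm h / ((r/2) * r^2)"
      using bound[of u] M u norm_triangle_ineq2[of u h] h r by (intro frac_le mult_right_mono mult_mono) auto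
    finally show "norm ((f u / (u - h) - f u / (u - 0)) / h - f u / (u - 0) ^ Suc 1) \<le> M * norm h / ((r/2) * r^2)" .
  qed (use r in auto)
  also have "\<dots> = 2 * pi * (2 * M * norm h / r^2)"
    using r by (simp add: field_simps power2_eq_square)
  finally have "2 * pi * norm ((f h - f 0) / h - deriv f 0) \<le> 2 * pi * (2 * M * norm h / r^2)"
    by (simp add: norm_mult)
  then show ?thesis
    by (rule mult_left_le_imp_le) (use pi_gt_zero in simp)
qed

text \<open>The derivative is the uniform limit of the holomorphic difference quotients
  \<open>(F a h - F a 0) / h\<close> as \<open>h \<rightarrow> 0\<close>; the Cauchy estimate above makes the convergence uniform.\<close>

lemma holomorphic_on_deriv_parametric:
  fixes F :: "complex \<Rightarrow> complex \<Rightarrow> complex"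
  assumes r: "r > 0"
    and cont: "continuous_on (cball 0 r \<times> cball 0 r) (\<lambda>(a, b). F a b)"
    and hol2: "\<And>a. a \<in> cball 0 r \<Longrightarrow> F a holomorphic_on ball 0 r"
    and hol1: "\<And>b. b \<in> cball 0 r \<Longrightarrow> (\<lambda>a. F a b) holomorphic_on ball 0 r"
  shows "(\<lambda>a. deriv (F a) 0) holomorphic_on ball 0 r"
proof -
  obtain M where M: "\<And>a b. a \<in> cball 0 r \<Longrightarrow> b \<in> cball 0 r \<Longrightarrow> norm (F a b) \<le> M"
  proof -
    have "bounded ((\<lambda>(a, b). F a b) ` (cball 0 r \<times> cball 0 r))"
      by (intro compact_imp_bounded compact_continuous_image cont compact_Times compact_cball)
    then show ?thesis using that by (force simp: bounded_iff)
  qed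
  have M0: "M \<ge> 0" using M[of 0 0] r norm_ge_zero[of "F 0 0"] by (auto simp del: norm_ge_zero)
  have cont2: "continuous_on (cball 0 r) (F a)" if "a \<in> cball 0 r" for a
  proof -
    have "continuous_on (cball 0 r) ((\<lambda>(a, b). F a b) \<circ> (\<lambda>b. (a, b)))"
      by (intro continuous_on_compose continuous_intros continuous_on_subset[OF cont]) (use that in auto)
    then show ?thesis by (simp add: o_def)
  qed
  have cont1: "continuous_on (cball 0 r) (\<lambda>a. F a b)" if "b \<in> cball 0 r" for b
  proof -
    have "continuous_on (cball 0 r) ((\<lambda>(a, b). F a b) \<circ> (\<lambda>a. (a, b)))"
      by (intro continuous_on_compose continuous_intros continuous_on_subset[OF cont]) (use that in auto)
    then show ?thesis by (simp add: o_def)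
  qed
  define q where "q h = (\<lambda>a. (F a h - F a 0) / h)" for h
  have "uniform_limit (cball 0 r) q (\<lambda>a. deriv (F a) 0) (at 0)"
  proof (rule uniform_limitI)
    fix e :: real assume e: "e > 0"
    define \<delta> where "\<delta> = min (r/2) (e * r^2 / (2 * M + 1))"
    have "dist (q h a) (deriv (F a) 0) < e"
      if "a \<in> cball 0 r" "h \<noteq> 0" "norm h < \<delta>" for h a
    proof -
      have "dist (q h a) (deriv (F a) 0) \<le> 2 * M * norm h / r^2"
        using norm_difference_quotient_minus_deriv_le[OF r cont2 hol2, of a M h] M that
        by (simp add: q_def dist_norm \<delta>_def)
      also have "\<dots> \<le> (2 * M + 1) * norm h / r^2"
        by (intro divide_right_mono mult_right_mono) auto
      also have "\<dots> < e"
        using that r M0 by (simp add: \<delta>_def pos_divide_less_eq field_simps)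
      finally show ?thesis .
    qed
    moreover have "\<delta> > 0" using r e M0 by (simp add: \<delta>_def)
    ultimately show "\<forall>\<^sub>F h in at 0. \<forall>a\<in>cball 0 r. dist (q h a) (deriv (F a) 0) < e"
      unfolding eventually_at by (auto simp: dist_norm)
  qed
  moreover have "continuous_on (cball 0 r) (q h) \<and> q h holomorphic_on ball 0 r"
    if "h \<noteq> 0" "dist h 0 < r" for h
  proof -
    have "h \<in> cball 0 r" "0 \<in> cball (0::complex) r" using that r by (auto simp: dist_norm)
    then have "continuous_on (cball 0 r) (\<lambda>a. (F a h - F a 0) / h)"
      and "(\<lambda>a. (F a h - F a 0) / h) holomorphic_on ball 0 r"
      using \<open>h \<noteq> 0\<close> by (auto intro!: continuous_intros cont1 holomorphic_intros hol1)
    then show ?thesis by (simp add: q_def)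
  qed
  then have "\<forall>\<^sub>F h in at 0. continuous_on (cball 0 r) (q h) \<and> q h holomorphic_on ball 0 r"
    unfolding eventually_at using r by blast
  ultimately show ?thesis
    by (auto elim: holomorphic_uniform_limit)
qed

section \<open>Holomorphic functions along coordinate lines\<close>

lemma bounded_linear_axis: "bounded_linear (axis k :: complex \<Rightarrow> complex ^ 'n)"
proof -
  have "linear (axis k :: complex \<Rightarrow> complex ^ 'n)"
    by (rule linearI) (simp_all add: axis_def vec_eq_iff)
  then show ?thesis by (simp add: linear_conv_bounded_linear)
qed

lemma norm_axis: "norm (axis k x :: 'a::real_normed_vector ^ 'n) = norm x"
proof -
  have "(\<Sum>i\<in>UNIV. (norm (vec_nth (axis k x :: 'a ^ 'n) i))\<^sup>2) = (\<Sum>i\<in>UNIV. if i = k then (norm x)\<^sup>2 else 0)"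
    by (rule sum.cong) (auto simp: axis_def)
  then show ?thesis by (simp add: norm_vec_def L2_set_def)
qed

lemma axis_0 [simp]: "axis k 0 = (0 :: 'a::zero ^ 'n)"
  by (simp add: axis_def vec_eq_iff)

lemma axis_eq_scalar_mult_axis_1: "axis k b = b *s (axis k 1 :: 'a::ring_1 ^ 'n)"
  by (simp add: axis_def vec_eq_iff)

lemma continuous_on_axis_line:
  "continuous_on S (\<lambda>t::real. z + axis j (of_real t * e) :: complex ^ 'n)"
  by (intro continuous_intros continuous_on_compose2[OF bounded_linear.continuous_on[OF bounded_linear_axis continuous_on_id]]) auto

lemma eventually_axis_line_in_open:
  fixes z :: "complex ^ 'n"
  assumes "open W" "z \<in> W"
  shows "\<forall>\<^sub>F t in nhds (0::real). z + axis j (of_real t * e) \<in> W"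
proof -
  have "open ((\<lambda>t::real. z + axis j (of_real t * e)) -` W)"
    using open_vimage[OF assms(1) continuous_on_axis_line] by simp
  then show ?thesis
    unfolding eventually_nhds using assms(2) by (intro exI[of _ "(\<lambda>t::real. z + axis j (of_real t * e)) -` W"]) auto
qed

lemma has_vector_derivative_real_line:
  fixes f :: "complex \<Rightarrow> complex"
  assumes "(f has_field_derivative f') (at 0)"
  shows "((\<lambda>t::real. f (of_real t * c)) has_vector_derivative f' * c) (at 0)"
proof -
  have "((\<lambda>b. b * c) has_field_derivative c) (at 0)"
    by (auto intro!: derivative_eq_intros)
  then have "((\<lambda>b. f (b * c)) has_field_derivative f' * c) (at (of_real 0))"
    using DERIV_chain2[of f f' "\<lambda>b. b * c" 0 c] assms by simp
  from has_vector_derivative_real_field[OF this] show ?thesis by simp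
qed

lemma has_real_derivative_cmod_power2:
  assumes "(h has_vector_derivative h') (at x)"
  shows "((\<lambda>t::real. (cmod (h t))\<^sup>2) has_real_derivative 2 * Re (cnj (h x) * h')) (at x)"
proof -
  have "((\<lambda>t. (Re (h t))\<^sup>2 + (Im (h t))\<^sup>2) has_real_derivative
      2 * Re (h x) * Re h' + 2 * Im (h x) * Im h') (at x)"
    by (auto intro!: derivative_eq_intros has_field_derivative_Re has_field_derivative_Im assms)
  then show ?thesis by (simp add: cmod_power2 algebra_simps)
qed

definition cpartial :: "(complex ^ 'n \<Rightarrow> complex) \<Rightarrow> 'n \<Rightarrow> complex ^ 'n \<Rightarrow> complex" where
  "cpartial G k z = deriv (\<lambda>b. G (z + axis k b)) 0"

lemma holo_on_imp_continuous_on: "holo_on U G \<Longrightarrow> continuous_on U G"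
  unfolding holo_on_def
  by (metis continuous_at_imp_continuous_on has_derivative_continuous)

lemma holo_on_subset: "holo_on U G \<Longrightarrow> V \<subseteq> U \<Longrightarrow> holo_on V G"
  unfolding holo_on_def by blast

lemma holo_on_has_field_derivative_cpartial:
  assumes "holo_on U G" "z + axis k b \<in> U"
  shows "((\<lambda>b. G (z + axis k b)) has_field_derivative cpartial G k (z + axis k b)) (at b)"
proof -
  have at0: "((\<lambda>c. G (p + axis k c)) has_field_derivative cpartial G k p) (at 0)" if "p \<in> U" for p
  proof -
    obtain G' where G': "(G has_derivative G') (at p)" "\<And>c v. G' (c *s v) = c * G' v"
      using assms(1) \<open>p \<in> U\<close> unfolding holo_on_def by blast
    have "((\<lambda>c. p + axis k c) has_derivative axis k) (at 0)"
      using has_derivative_add[OF has_derivative_const bounded_linear_imp_has_derivative[OF bounded_linear_axis]]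
      by simp
    from diff_chain_at[OF this, of G G'] G'(1) have "((\<lambda>c. G (p + axis k c)) has_derivative G' \<circ> axis k) (at 0)"
      by (simp add: o_def)
    moreover have "G' \<circ> axis k = (\<lambda>c. G' (axis k 1) * c)"
    proof
      fix c show "(G' \<circ> axis k) c = G' (axis k 1) * c"
        using G'(2)[of c "axis k 1"] axis_eq_scalar_mult_axis_1[of k c] by (simp add: mult.commute)
    qed
    ultimately have "((\<lambda>c. G (p + axis k c)) has_field_derivative G' (axis k 1)) (at 0)"
      by (simp add: has_field_derivative_def)
    then show ?thesis
      by (simp add: cpartial_def DERIV_imp_deriv)
  qed
  have "z + axis k (c + b) = z + axis k b + axis k c" for c
    by (simp add: axis_def vec_eq_iff)
  with at0[OF assms(2)]
  have "((\<lambda>c. G (z + axis k (c + b))) has_field_derivative cpartial G k (z + axis k b)) (at 0)"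
    by presburger
  then show ?thesis
    using DERIV_shift[of "\<lambda>c. G (z + axis k c)" _ 0 b] by simp
qed

text \<open>The function \<open>(a, b) \<mapsto> G (z + a e\<^sub>j + b e\<^sub>k)\<close> is continuous and separately holomorphic,
  so Osgood's lemma applies.\<close>

lemma field_differentiable_cpartial_line:
  assumes holo: "holo_on U G" and U: "open U" and z: "z \<in> U"
  shows "(\<lambda>a. cpartial G k (z + axis j a)) field_differentiable (at 0)"
proof -
  obtain e where e: "e > 0" "ball z e \<subseteq> U" using U z open_contains_ball by blast
  define r where "r = e / 3"
  have r: "r > 0" using e by (simp add: r_def)
  define F where "F a = (\<lambda>b. G (z + axis j a + axis k b))" for a
  have inU: "z + axis j a + axis k b \<in> U" if "a \<in> cball 0 r" "b \<in> cball 0 r" for a b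
  proof -
    have "norm (axis j a + axis k b :: complex ^ _) \<le> norm a + norm b"
      using norm_triangle_ineq[of "axis j a :: complex ^ _" "axis k b"] by (simp add: norm_axis)
    also have "\<dots> < e" using that r_def e by auto
    finally have "z + axis j a + axis k b \<in> ball z e"
      using norm_minus_cancel[of "axis j a + axis k b"] by (simp add: dist_norm add.assoc)
    then show ?thesis using e by blast
  qed
  have "continuous_on (cball 0 r \<times> cball 0 r) (\<lambda>p. z + axis j (fst p) + axis k (snd p))"
    by (intro continuous_intros continuous_on_compose2[OF bounded_linear.continuous_on[OF bounded_linear_axis continuous_on_id]]
        continuous_on_fst continuous_on_snd continuous_on_id) auto
  from continuous_on_compose2[OF holo_on_imp_continuous_on[OF holo] this]
  have "continuous_on (cball 0 r \<times> cball 0 r) (\<lambda>p. G (z + axis j (fst p) + axis k (snd p)))"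
    using inU by force
  then have "continuous_on (cball 0 r \<times> cball 0 r) (\<lambda>(a, b). F a b)"
    by (simp add: F_def case_prod_beta)
  moreover have "F a holomorphic_on ball 0 r" if "a \<in> cball 0 r" for a
    unfolding holomorphic_on_def field_differentiable_def
  proof
    fix b :: complex assume "b \<in> ball 0 r"
    then have "(z + axis j a) + axis k b \<in> U" using inU[OF that] by auto
    from has_field_derivative_at_within[OF holo_on_has_field_derivative_cpartial[OF holo this]]
    show "\<exists>f'. (F a has_field_derivative f') (at b within ball 0 r)"
      by (auto simp: F_def)
  qed
  moreover have "(\<lambda>a. F a b) holomorphic_on ball 0 r" if "b \<in> cball 0 r" for b
    unfolding holomorphic_on_def field_differentiable_def
  proof
    fix a :: complex assume "a \<in> ball 0 r"
    then have "(z + axis k b) + axis j a \<in> U" using inU[OF _ that, of a] by (auto simp: ac_simps)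
    from has_field_derivative_at_within[OF holo_on_has_field_derivative_cpartial[OF holo this]]
    show "\<exists>f'. ((\<lambda>a. F a b) has_field_derivative f') (at a within ball 0 r)"
      by (auto simp: F_def ac_simps)
  qed
  ultimately have "(\<lambda>a. deriv (F a) 0) holomorphic_on ball 0 r"
    by (rule holomorphic_on_deriv_parametric[OF r])
  then have "(\<lambda>a. deriv (F a) 0) field_differentiable (at 0)"
    using r by (intro holomorphic_on_imp_differentiable_at) auto
  then show ?thesis
    by (simp add: F_def cpartial_def)
qed

section \<open>Real partial derivatives and the complex Hessian\<close>

definition wirtinger :: "('p \<Rightarrow> 'i \<Rightarrow> complex \<Rightarrow> 'p) \<Rightarrow> ('p \<Rightarrow> real) \<Rightarrow> 'i \<Rightarrow> 'p \<Rightarrow> complex" where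
  "wirtinger sh f j p = (complex_of_real (dpart sh f j 1 p) - \<i> * complex_of_real (dpart sh f j \<i> p)) / 2"

lemma has_real_derivative_dpart:
  "(\<lambda>t. f (sh p k (of_real t * c))) differentiable (at 0) \<Longrightarrow>
    ((\<lambda>t. f (sh p k (of_real t * c))) has_real_derivative dpart sh f k c p) (at 0)"
  unfolding dpart_def by (simp add: DERIV_deriv_iff_real_differentiable)

lemma dpart_eqI:
  "((\<lambda>t. f (sh p k (of_real t * c))) has_real_derivative D) (at 0) \<Longrightarrow> dpart sh f k c p = D"
  unfolding dpart_def by (rule DERIV_imp_deriv)

lemma dpart_add_const: "dpart sh (\<lambda>p. f p + a) = dpart sh f"
proof -
  have "((\<lambda>t. g t + a) has_real_derivative D) (at 0) \<longleftrightarrow> (g has_real_derivative D) (at 0)"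
    for g :: "real \<Rightarrow> real" and D
    using DERIV_add[OF _ DERIV_const[of "-a"], of "\<lambda>t. g t + a" D] DERIV_add[OF _ DERIV_const[of a], of g D]
    by auto
  then show ?thesis
    by (intro ext) (simp add: dpart_def deriv_def)
qed

lemma cHess_add_const: "cHess sh (\<lambda>p. f p + a) = cHess sh f"
  by (simp add: cHess_def[abs_def] dpart_add_const)

lemma wirtinger_add_const: "wirtinger sh (\<lambda>p. f p + a) = wirtinger sh f"
  by (simp add: wirtinger_def[abs_def] dpart_add_const)

lemma sh_vec_0 [simp]: "sh_vec p k 0 = p"
  by (simp add: sh_vec_def)

definition twice_partially_differentiable_on :: "(complex ^ 'n) set \<Rightarrow> (complex ^ 'n \<Rightarrow> real) \<Rightarrow> bool" where
  "twice_partially_differentiable_on W f \<longleftrightarrow>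
     (\<forall>p\<in>W. \<forall>k c. c \<in> {1, \<i>} \<longrightarrow>
        (\<lambda>t. f (sh_vec p k (of_real t * c))) differentiable (at 0) \<and>
        (\<forall>j e. e \<in> {1, \<i>} \<longrightarrow>
           (\<lambda>t. dpart sh_vec f k c (sh_vec p j (of_real t * e))) differentiable (at 0)))"

lemma twice_partially_differentiable_onD:
  assumes "twice_partially_differentiable_on W f" "p \<in> W" "c \<in> {1, \<i>}"
  shows "((\<lambda>t. f (sh_vec p k (of_real t * c))) has_real_derivative dpart sh_vec f k c p) (at 0)"
    and "e \<in> {1, \<i>} \<Longrightarrow> ((\<lambda>t. dpart sh_vec f k c (sh_vec p j (of_real t * e)))
      has_real_derivative dpart sh_vec (dpart sh_vec f k c) j e p) (at 0)"
  using assms unfolding twice_partially_differentiable_on_def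
  by (blast intro: has_real_derivative_dpart)+

lemma twice_partially_differentiable_on_subset:
  "twice_partially_differentiable_on W f \<Longrightarrow> V \<subseteq> W \<Longrightarrow> twice_partially_differentiable_on V f"
  unfolding twice_partially_differentiable_on_def by blast

lemma C2_on_imp_twice_partially_differentiable_on:
  "C2_on D f \<Longrightarrow> twice_partially_differentiable_on D f"
  by (simp add: C2_on_def twice_partially_differentiable_on_def)

lemma C2_on_imp_continuous_on: "C2_on D f \<Longrightarrow> continuous_on D f"
  by (simp add: C2_on_def)

lemma C2_on_continuous_on_cHess: "C2_on D f \<Longrightarrow> continuous_on D (cHess sh_vec f j k)"
  unfolding cHess_def[abs_def] C2_on_def by (intro continuous_intros) auto

lemma C2_on_continuous_on_wirtinger: "C2_on D f \<Longrightarrow> continuous_on D (wirtinger sh_vec f j)"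
  unfolding wirtinger_def[abs_def] C2_on_def by (intro continuous_intros) auto

lemma twice_partially_differentiable_on_add_const:
  "twice_partially_differentiable_on W f \<Longrightarrow> twice_partially_differentiable_on W (\<lambda>p. f p + a)"
  unfolding twice_partially_differentiable_on_def dpart_add_const
  by (auto intro: differentiable_add)

context
  fixes W :: "(complex ^ 'n) set" and f g :: "complex ^ 'n \<Rightarrow> real"
  assumes f: "twice_partially_differentiable_on W f" and g: "twice_partially_differentiable_on W g"
begin

lemma dpart_mult:
  assumes "p \<in> W" "c \<in> {1, \<i>}"
  shows "dpart sh_vec (\<lambda>p. f p * g p) k c p = dpart sh_vec f k c p * g p + f p * dpart sh_vec g k c p"
proof (rule dpart_eqI)
  show "((\<lambda>t. f (sh_vec p k (of_real t * c)) * g (sh_vec p k (of_real t * c))) has_real_derivative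
      dpart sh_vec f k c p * g p + f p * dpart sh_vec g k c p) (at 0)"
    using DERIV_mult'[OF twice_partially_differentiable_onD(1)[OF f assms] twice_partially_differentiable_onD(1)[OF g assms]]
    by (simp add: algebra_simps)
qed

lemma has_real_derivative_dpart_mult:
  assumes "open W" "p \<in> W" "c \<in> {1, \<i>}" "e \<in> {1, \<i>}"
  shows "((\<lambda>t. dpart sh_vec (\<lambda>p. f p * g p) k c (sh_vec p j (of_real t * e))) has_real_derivative
      dpart sh_vec (dpart sh_vec f k c) j e p * g p + dpart sh_vec f k c p * dpart sh_vec g j e p
      + dpart sh_vec f j e p * dpart sh_vec g k c p + f p * dpart sh_vec (dpart sh_vec g k c) j e p) (at 0)"
proof -
  have "\<forall>\<^sub>F t in nhds 0. dpart sh_vec (\<lambda>p. f p * g p) k c (sh_vec p j (of_real t * e)) =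
      dpart sh_vec f k c (sh_vec p j (of_real t * e)) * g (sh_vec p j (of_real t * e))
      + f (sh_vec p j (of_real t * e)) * dpart sh_vec g k c (sh_vec p j (of_real t * e))"
    using eventually_axis_line_in_open[OF assms(1,2), of j e]
    by (elim eventually_mono) (simp add: dpart_mult[OF _ assms(3)] sh_vec_def)
  moreover have "((\<lambda>t. dpart sh_vec f k c (sh_vec p j (of_real t * e)) * g (sh_vec p j (of_real t * e))
      + f (sh_vec p j (of_real t * e)) * dpart sh_vec g k c (sh_vec p j (of_real t * e))) has_real_derivative
      dpart sh_vec (dpart sh_vec f k c) j e p * g p + dpart sh_vec f k c p * dpart sh_vec g j e p
      + dpart sh_vec f j e p * dpart sh_vec g k c p + f p * dpart sh_vec (dpart sh_vec g k c) j e p) (at 0)"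
  proof -
    note first = twice_partially_differentiable_onD(1)[OF _ assms(2,4), of _ j]
    note second = twice_partially_differentiable_onD(2)[OF _ assms(2,3,4), of _ k j]
    from DERIV_add[OF DERIV_mult'[OF second[OF f] first[OF g]] DERIV_mult'[OF first[OF f] second[OF g]]]
    show ?thesis
      by (simp add: algebra_simps)
  qed
  ultimately show ?thesis
    by (simp add: DERIV_cong_ev)
qed

lemma twice_partially_differentiable_on_mult:
  assumes "open W"
  shows "twice_partially_differentiable_on W (\<lambda>p. f p * g p)"
  unfolding twice_partially_differentiable_on_def
proof (intro ballI allI impI conjI)
  fix p k c j e assume p: "p \<in> W" and c: "c \<in> {1, \<i>}" and e: "e \<in> {1, \<i>}"
  show "(\<lambda>t. dpart sh_vec (\<lambda>p. f p * g p) k c (sh_vec p j (of_real t * e))) differentiable (at 0)"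
    using has_real_derivative_dpart_mult[OF assms p c e] real_differentiable_def by blast
next
  fix p k c assume p: "p \<in> W" and c: "c \<in> {1, \<i>}"
  then show "(\<lambda>t. f (sh_vec p k (of_real t * c)) * g (sh_vec p k (of_real t * c))) differentiable (at 0)"
    using DERIV_mult'[OF twice_partially_differentiable_onD(1)[OF f p c] twice_partially_differentiable_onD(1)[OF g p c]]
    by (auto simp: real_differentiable_def)
qed

lemma wirtinger_mult:
  "p \<in> W \<Longrightarrow> wirtinger sh_vec (\<lambda>p. f p * g p) j p = g p * wirtinger sh_vec f j p + f p * wirtinger sh_vec g j p"
  unfolding wirtinger_def by (simp add: dpart_mult field_simps)

lemma cHess_mult:
  assumes "open W" "p \<in> W"
  shows "cHess sh_vec (\<lambda>p. f p * g p) j k p = g p * cHess sh_vec f j k p + f p * cHess sh_vec g j k p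
      + wirtinger sh_vec f j p * cnj (wirtinger sh_vec g k p) + wirtinger sh_vec g j p * cnj (wirtinger sh_vec f k p)"
proof -
  have "dpart sh_vec (dpart sh_vec (\<lambda>p. f p * g p) k c) j e p =
      dpart sh_vec (dpart sh_vec f k c) j e p * g p + dpart sh_vec f k c p * dpart sh_vec g j e p
      + dpart sh_vec f j e p * dpart sh_vec g k c p + f p * dpart sh_vec (dpart sh_vec g k c) j e p"
    if "c \<in> {1, \<i>}" "e \<in> {1, \<i>}" for c e
    by (rule dpart_eqI) (rule has_real_derivative_dpart_mult[OF assms that])
  then show ?thesis
    unfolding cHess_def wirtinger_def
    by (simp add: complex_eq_iff field_simps)
qed

end

context
  fixes U :: "(complex ^ 'n) set" and G :: "complex ^ 'n \<Rightarrow> complex"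
  assumes holo: "holo_on U G"
begin

lemma has_vector_derivative_holo_real_line:
  "p \<in> U \<Longrightarrow> ((\<lambda>t. G (sh_vec p k (of_real t * c))) has_vector_derivative cpartial G k p * c) (at 0)"
  using holo_on_has_field_derivative_cpartial[OF holo, of p k 0]
  by (auto simp: sh_vec_def intro: has_vector_derivative_real_line)

lemma dpart_cmod_power2:
  "p \<in> U \<Longrightarrow> dpart sh_vec (\<lambda>p. (cmod (G p))\<^sup>2) k c p = 2 * Re (cnj (G p) * (cpartial G k p * c))"
  by (rule dpart_eqI) (use has_real_derivative_cmod_power2[OF has_vector_derivative_holo_real_line] in simp)

lemma has_real_derivative_dpart_cmod_power2:
  assumes "open U" "p \<in> U"
  shows "((\<lambda>t. dpart sh_vec (\<lambda>p. (cmod (G p))\<^sup>2) k c (sh_vec p j (of_real t * e))) has_real_derivative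
      2 * Re (cnj (G p) * (deriv (\<lambda>a. cpartial G k (p + axis j a)) 0 * e * c)
        + cnj (cpartial G j p * e) * (cpartial G k p * c))) (at 0)"
proof -
  have "\<forall>\<^sub>F t in nhds 0. dpart sh_vec (\<lambda>p. (cmod (G p))\<^sup>2) k c (sh_vec p j (of_real t * e)) =
      2 * Re (cnj (G (sh_vec p j (of_real t * e))) * (cpartial G k (sh_vec p j (of_real t * e)) * c))"
    using eventually_axis_line_in_open[OF assms, of j e]
    by (elim eventually_mono) (simp add: dpart_cmod_power2 sh_vec_def)
  moreover have "((\<lambda>a. cpartial G k (p + axis j a)) has_field_derivative deriv (\<lambda>a. cpartial G k (p + axis j a)) 0) (at 0)"
    using field_differentiable_cpartial_line[OF holo assms] by (simp add: DERIV_deriv_iff_field_differentiable)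
  then have "((\<lambda>t. cpartial G k (sh_vec p j (of_real t * e))) has_vector_derivative
      deriv (\<lambda>a. cpartial G k (p + axis j a)) 0 * e) (at 0)"
    unfolding sh_vec_def by (rule has_vector_derivative_real_line)
  then have "((\<lambda>t. 2 * Re (cnj (G (sh_vec p j (of_real t * e))) * (cpartial G k (sh_vec p j (of_real t * e)) * c)))
      has_real_derivative 2 * Re (cnj (G p) * (deriv (\<lambda>a. cpartial G k (p + axis j a)) 0 * e * c)
        + cnj (cpartial G j p * e) * (cpartial G k p * c))) (at 0)"
    using has_vector_derivative_holo_real_line[OF assms(2), of j e]
    by (auto intro!: derivative_eq_intros has_field_derivative_Re has_vector_derivative_mult
        has_vector_derivative_cnj has_vector_derivative_mult_left simp: algebra_simps)
  ultimately show ?thesis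
    by (simp add: DERIV_cong_ev)
qed

lemma twice_partially_differentiable_on_cmod_power2:
  assumes "open U"
  shows "twice_partially_differentiable_on U (\<lambda>p. (cmod (G p))\<^sup>2)"
  unfolding twice_partially_differentiable_on_def real_differentiable_def
proof (intro ballI allI impI conjI)
  fix p k c j e assume p: "p \<in> U"
  show "\<exists>D. ((\<lambda>t. (cmod (G (sh_vec p k (of_real t * c))))\<^sup>2) has_real_derivative D) (at 0)"
    using has_real_derivative_cmod_power2[OF has_vector_derivative_holo_real_line[OF p]] by blast
  show "\<exists>D. ((\<lambda>t. dpart sh_vec (\<lambda>p. (cmod (G p))\<^sup>2) k c (sh_vec p j (of_real t * e)))
      has_real_derivative D) (at 0)"
    using has_real_derivative_dpart_cmod_power2[OF assms p] by blast
qed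

lemma wirtinger_cmod_power2:
  "p \<in> U \<Longrightarrow> wirtinger sh_vec (\<lambda>p. (cmod (G p))\<^sup>2) j p = cnj (G p) * cpartial G j p"
  unfolding wirtinger_def by (simp add: dpart_cmod_power2 complex_eq_iff)

text \<open>The second derivative of \<open>G\<close> enters only through \<open>Re (X e c)\<close>, which cancels in the combination
  defining \<open>cHess\<close>.\<close>

lemma cHess_cmod_power2:
  assumes "open U" "p \<in> U"
  shows "cHess sh_vec (\<lambda>p. (cmod (G p))\<^sup>2) j k p = cpartial G j p * cnj (cpartial G k p)"
proof -
  have second: "dpart sh_vec (dpart sh_vec (\<lambda>p. (cmod (G p))\<^sup>2) k c) j e p =
      2 * Re (cnj (G p) * (deriv (\<lambda>a. cpartial G k (p + axis j a)) 0 * e * c)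
        + cnj (cpartial G j p * e) * (cpartial G k p * c))" for c e
    by (rule dpart_eqI) (rule has_real_derivative_dpart_cmod_power2[OF assms])
  show ?thesis
    unfolding cHess_def second by (simp add: complex_eq_iff field_simps)
qed

end

section \<open>Hermitian forms\<close>

definition herm_form :: "'i set \<Rightarrow> ('i \<Rightarrow> 'i \<Rightarrow> complex) \<Rightarrow> ('i \<Rightarrow> complex) \<Rightarrow> complex" where
  "herm_form I H v = (\<Sum>j\<in>I. \<Sum>k\<in>I. H j k * v j * cnj (v k))"

lemma spsh_at_iff_herm_form:
  "spsh_at sh I f p \<longleftrightarrow> (\<forall>v. (\<exists>i\<in>I. v i \<noteq> 0) \<longrightarrow>
     Im (herm_form I (\<lambda>j k. cHess sh f j k p) v) = 0 \<and> Re (herm_form I (\<lambda>j k. cHess sh f j k p) v) > 0)"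
  by (simp add: spsh_at_def herm_form_def Let_def)

lemma herm_form_rank_one: "herm_form I (\<lambda>j k. a j * cnj (b k)) v = (\<Sum>j\<in>I. a j * v j) * cnj (\<Sum>k\<in>I. b k * v k)"
  by (simp add: herm_form_def sum_product cnj_sum algebra_simps)

lemma herm_form_add: "herm_form I (\<lambda>j k. H j k + H' j k) v = herm_form I H v + herm_form I H' v"
  by (simp add: herm_form_def sum.distrib distrib_right)

lemma herm_form_scale: "herm_form I (\<lambda>j k. c * H j k) v = c * herm_form I H v"
  by (simp add: herm_form_def sum_distrib_left mult.assoc)

lemma herm_form_of_real_scale: "herm_form I H (\<lambda>j. of_real r * v j) = of_real (r\<^sup>2) * herm_form I H v"
  by (simp add: herm_form_def sum_distrib_left power2_eq_square algebra_simps)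

lemma herm_form_Plus:
  fixes H :: "'a + 'b \<Rightarrow> 'a + 'b \<Rightarrow> complex"
  assumes "finite A" "finite B"
  shows "herm_form (A <+> B) H v =
    herm_form A (\<lambda>j k. H (Inl j) (Inl k)) (v \<circ> Inl) + herm_form B (\<lambda>l m. H (Inr l) (Inr m)) (v \<circ> Inr)
    + (\<Sum>j\<in>A. \<Sum>l\<in>B. H (Inl j) (Inr l) * v (Inl j) * cnj (v (Inr l)))
    + (\<Sum>l\<in>B. \<Sum>j\<in>A. H (Inr l) (Inl j) * v (Inr l) * cnj (v (Inl j)))"
  using assms by (simp add: herm_form_def sum.Plus sum.distrib)

lemma cmod_sum_mult_cnj_power2_le:
  fixes a b :: "'i \<Rightarrow> complex"
  shows "(cmod (\<Sum>i\<in>I. a i * cnj (b i)))\<^sup>2 \<le> (\<Sum>i\<in>I. (cmod (a i))\<^sup>2) * (\<Sum>i\<in>I. (cmod (b i))\<^sup>2)"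
proof -
  have "(cmod (\<Sum>i\<in>I. a i * cnj (b i)))\<^sup>2 \<le> (\<Sum>i\<in>I. cmod (a i) * cmod (b i))\<^sup>2"
    using norm_sum[of "\<lambda>i. a i * cnj (b i)" I] by (intro power_mono) (simp_all add: norm_mult)
  also have "\<dots> \<le> (\<Sum>i\<in>I. (cmod (a i))\<^sup>2) * (\<Sum>i\<in>I. (cmod (b i))\<^sup>2)"
    by (rule Cauchy_Schwarz_ineq_sum)
  finally show ?thesis .
qed

lemma discriminant_pos:
  fixes A B N Q :: real and a b :: complex
  assumes "A > 0" "B > 0" "(cmod b)\<^sup>2 \<le> B * N" "(cmod a)\<^sup>2 < A * Q"
  shows "0 < B * Q + 2 * Re (a * b) + A * N"
proof -
  have "B * (B * (cmod a)\<^sup>2 + 2 * A * Re (a * b) + A\<^sup>2 * N) \<ge> (B * cmod a - A * cmod b)\<^sup>2"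
  proof -
    have "- (cmod a * cmod b) \<le> Re (a * b)"
      using abs_Re_le_cmod[of "a * b"] by (simp add: norm_mult)
    then have "2 * A * B * (- (cmod a * cmod b)) \<le> 2 * A * B * Re (a * b)"
      using assms(1,2) by (intro mult_left_mono) auto
    moreover have "B * (A\<^sup>2 * N) \<ge> A\<^sup>2 * (cmod b)\<^sup>2"
      using mult_left_mono[OF assms(3), of "A\<^sup>2"] by (simp add: algebra_simps)
    ultimately show ?thesis
      by (simp add: power2_eq_square algebra_simps)
  qed
  moreover have "B * (B * (A * Q - (cmod a)\<^sup>2)) > 0"
    using assms by simp
  moreover have "B * (A * (B * Q + 2 * Re (a * b) + A * N)) =
      B * (B * (A * Q - (cmod a)\<^sup>2)) + B * (B * (cmod a)\<^sup>2 + 2 * A * Re (a * b) + A\<^sup>2 * N)"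
    by (simp add: power2_eq_square algebra_simps)
  ultimately have "B * (A * (B * Q + 2 * Re (a * b) + A * N)) > 0"
    using zero_le_power2[of "B * cmod a - A * cmod b"] by linarith
  then show ?thesis
    using assms(1,2) by (simp add: zero_less_mult_iff)
qed

text \<open>For \<open>f > 0\<close> the complex Hessian of \<open>log f\<close> is \<open>(f H\<^sub>f - \<partial>f \<otimes> conj \<partial>f) / f\<^sup>2\<close>, so this says
  that \<open>log f\<close> is strictly plurisubharmonic at \<open>p\<close>.\<close>

definition log_spsh_at :: "(complex ^ 'n \<Rightarrow> real) \<Rightarrow> complex ^ 'n \<Rightarrow> bool" where
  "log_spsh_at f p \<longleftrightarrow> f p > 0 \<and> (\<forall>\<xi>. (\<exists>j. \<xi> j \<noteq> 0) \<longrightarrow>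
     Im (herm_form UNIV (\<lambda>j k. cHess sh_vec f j k p) \<xi>) = 0 \<and>
     (cmod (\<Sum>j\<in>UNIV. wirtinger sh_vec f j p * \<xi> j))\<^sup>2 < f p * Re (herm_form UNIV (\<lambda>j k. cHess sh_vec f j k p) \<xi>))"

section \<open>The Hessian of \<open>A(z) |w|\<^sup>2\<close>\<close>

definition weighted_sqnorm :: "(complex ^ 'n \<Rightarrow> real) \<Rightarrow> nat \<Rightarrow> (complex ^ 'n) \<times> (nat \<Rightarrow> complex) \<Rightarrow> real" where
  "weighted_sqnorm A d = (\<lambda>(z, w). A z * (\<Sum>i<d. (cmod (w i))\<^sup>2))"

lemma sh_prod_Inl: "sh_prod (p, w) (Inl k) x = (sh_vec p k x, w)"
  by (simp add: sh_prod_def sh_vec_def)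

lemma sh_prod_Inr: "sh_prod (p, w) (Inr l) x = (p, w(l := w l + x))"
  by (simp add: sh_prod_def)

lemma has_real_derivative_sum_cmod_power2_upd:
  fixes w :: "nat \<Rightarrow> complex"
  assumes "l < d"
  shows "((\<lambda>t. \<Sum>i<d. (cmod ((w(l := w l + of_real t * c)) i))\<^sup>2) has_real_derivative 2 * Re (cnj (w l) * c)) (at 0)"
proof -
  have "(\<Sum>i<d. (cmod ((w(l := x)) i))\<^sup>2) = (cmod x)\<^sup>2 + (\<Sum>i\<in>{..<d} - {l}. (cmod ((w(l := x)) i))\<^sup>2)" for x
    using assms by (subst sum.remove[of "{..<d}" l]) simp_all
  also have "(\<Sum>i\<in>{..<d} - {l}. (cmod ((w(l := x)) i))\<^sup>2) = (\<Sum>i\<in>{..<d} - {l}. (cmod (w i))\<^sup>2)" for x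
    by (rule sum.cong) simp_all
  moreover have "((\<lambda>t. (cmod (w l + of_real t * c))\<^sup>2 + (\<Sum>i\<in>{..<d} - {l}. (cmod (w i))\<^sup>2))
      has_real_derivative 2 * Re (cnj (w l) * c)) (at 0)"
  proof -
    have "((\<lambda>t. w l + of_real t * c) has_vector_derivative c) (at 0)"
      by (auto intro!: derivative_eq_intros)
    from DERIV_add[OF has_real_derivative_cmod_power2[OF this] DERIV_const] show ?thesis
      by simp
  qed
  ultimately show ?thesis by simp
qed

lemma dpart_weighted_sqnorm_Inr:
  assumes "l < d"
  shows "dpart sh_prod (weighted_sqnorm A d) (Inr l) c (p, w) = A p * (2 * Re (cnj (w l) * c))"
  using DERIV_cmult[OF has_real_derivative_sum_cmod_power2_upd[OF assms]]
  by (intro dpart_eqI) (simp add: sh_prod_Inr weighted_sqnorm_def)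

context
  fixes W :: "(complex ^ 'n) set" and A :: "complex ^ 'n \<Rightarrow> real"
  assumes W: "open W" and A: "twice_partially_differentiable_on W A"
begin

lemma dpart_weighted_sqnorm_Inl:
  assumes "p \<in> W" "c \<in> {1, \<i>}"
  shows "dpart sh_prod (weighted_sqnorm A d) (Inl k) c (p, w) = dpart sh_vec A k c p * (\<Sum>i<d. (cmod (w i))\<^sup>2)"
proof (rule dpart_eqI)
  from DERIV_cmult_right[OF twice_partially_differentiable_onD(1)[OF A assms]]
  show "((\<lambda>t. weighted_sqnorm A d (sh_prod (p, w) (Inl k) (of_real t * c))) has_real_derivative
      dpart sh_vec A k c p * (\<Sum>i<d. (cmod (w i))\<^sup>2)) (at 0)"
    by (simp add: sh_prod_Inl weighted_sqnorm_def)
qed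

lemma cHess_weighted_sqnorm_Inl_Inl:
  assumes "p \<in> W"
  shows "cHess sh_prod (weighted_sqnorm A d) (Inl j) (Inl k) (p, w) = (\<Sum>i<d. (cmod (w i))\<^sup>2) * cHess sh_vec A j k p"
proof -
  have "dpart sh_prod (dpart sh_prod (weighted_sqnorm A d) (Inl k) c) (Inl j) e (p, w) =
      dpart sh_vec (dpart sh_vec A k c) j e p * (\<Sum>i<d. (cmod (w i))\<^sup>2)"
    if c: "c \<in> {1, \<i>}" and e: "e \<in> {1, \<i>}" for c e
  proof (rule dpart_eqI)
    have "\<forall>\<^sub>F t in nhds 0. dpart sh_prod (weighted_sqnorm A d) (Inl k) c (sh_prod (p, w) (Inl j) (of_real t * e))
        = dpart sh_vec A k c (sh_vec p j (of_real t * e)) * (\<Sum>i<d. (cmod (w i))\<^sup>2)"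
      using eventually_axis_line_in_open[OF W assms, of j e]
      by (elim eventually_mono) (simp add: sh_prod_Inl dpart_weighted_sqnorm_Inl[OF _ c] sh_vec_def)
    moreover note DERIV_cmult_right[OF twice_partially_differentiable_onD(2)[OF A assms c e]]
    ultimately show "((\<lambda>t. dpart sh_prod (weighted_sqnorm A d) (Inl k) c (sh_prod (p, w) (Inl j) (of_real t * e)))
        has_real_derivative dpart sh_vec (dpart sh_vec A k c) j e p * (\<Sum>i<d. (cmod (w i))\<^sup>2)) (at 0)"
      by (simp add: DERIV_cong_ev)
  qed
  then show ?thesis
    unfolding cHess_def by (simp add: algebra_simps)
qed

lemma cHess_weighted_sqnorm_Inl_Inr:
  assumes "p \<in> W" "l < d"
  shows "cHess sh_prod (weighted_sqnorm A d) (Inl j) (Inr l) (p, w) = wirtinger sh_vec A j p * w l"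
proof -
  have "dpart sh_prod (dpart sh_prod (weighted_sqnorm A d) (Inr l) c) (Inl j) e (p, w) =
      dpart sh_vec A j e p * (2 * Re (cnj (w l) * c))" if "e \<in> {1, \<i>}" for c e
  proof (rule dpart_eqI)
    from DERIV_cmult_right[OF twice_partially_differentiable_onD(1)[OF A assms(1) that]]
    show "((\<lambda>t. dpart sh_prod (weighted_sqnorm A d) (Inr l) c (sh_prod (p, w) (Inl j) (of_real t * e)))
        has_real_derivative dpart sh_vec A j e p * (2 * Re (cnj (w l) * c))) (at 0)"
      by (simp add: sh_prod_Inl dpart_weighted_sqnorm_Inr assms)
  qed
  then show ?thesis
    unfolding cHess_def wirtinger_def by (simp add: complex_eq_iff field_simps)
qed

lemma cHess_weighted_sqnorm_Inr_Inl:
  assumes "p \<in> W" "l < d"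
  shows "cHess sh_prod (weighted_sqnorm A d) (Inr l) (Inl k) (p, w) = cnj (wirtinger sh_vec A k p) * cnj (w l)"
proof -
  have "dpart sh_prod (dpart sh_prod (weighted_sqnorm A d) (Inl k) c) (Inr l) e (p, w) =
      dpart sh_vec A k c p * (2 * Re (cnj (w l) * e))" if "c \<in> {1, \<i>}" for c e
  proof (rule dpart_eqI)
    show "((\<lambda>t. dpart sh_prod (weighted_sqnorm A d) (Inl k) c (sh_prod (p, w) (Inr l) (of_real t * e)))
        has_real_derivative dpart sh_vec A k c p * (2 * Re (cnj (w l) * e))) (at 0)"
      using DERIV_cmult[OF has_real_derivative_sum_cmod_power2_upd[OF assms(2)]]
      by (simp add: sh_prod_Inr dpart_weighted_sqnorm_Inl[OF assms(1) that])
  qed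
  then show ?thesis
    unfolding cHess_def wirtinger_def by (simp add: complex_eq_iff field_simps)
qed

end

lemma cHess_weighted_sqnorm_Inr_Inr:
  assumes "l < d" "m < d"
  shows "cHess sh_prod (weighted_sqnorm A d) (Inr l) (Inr m) (p, w) = (if l = m then A p else 0)"
proof -
  have "dpart sh_prod (dpart sh_prod (weighted_sqnorm A d) (Inr m) c) (Inr l) e (p, w) =
      (if l = m then A p * (2 * Re (cnj e * c)) else 0)" for c e
  proof (rule dpart_eqI)
    have "((\<lambda>t. A p * (2 * Re (cnj (w l + of_real t * e) * c))) has_real_derivative A p * (2 * Re (cnj e * c))) (at 0)"
      by (auto intro!: derivative_eq_intros has_field_derivative_Re)
    then show "((\<lambda>t. dpart sh_prod (weighted_sqnorm A d) (Inr m) c (sh_prod (p, w) (Inr l) (of_real t * e)))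
        has_real_derivative (if l = m then A p * (2 * Re (cnj e * c)) else 0)) (at 0)"
      by (cases "l = m") (simp_all add: sh_prod_Inr dpart_weighted_sqnorm_Inr assms)
  qed
  then show ?thesis
    unfolding cHess_def using assms by (auto simp: complex_eq_iff)
qed

context
  fixes W :: "(complex ^ 'n) set" and A :: "complex ^ 'n \<Rightarrow> real"
  assumes W: "open W" and A: "twice_partially_differentiable_on W A"
begin

lemma herm_form_weighted_sqnorm:
  assumes p: "p \<in> W"
  shows "herm_form (UNIV <+> {..<d}) (\<lambda>a b. cHess sh_prod (weighted_sqnorm A d) a b (p, w)) v =
    of_real (\<Sum>i<d. (cmod (w i))\<^sup>2) * herm_form UNIV (\<lambda>j k. cHess sh_vec A j k p) (v \<circ> Inl)
    + of_real (2 * Re ((\<Sum>j\<in>UNIV. wirtinger sh_vec A j p * v (Inl j)) * (\<Sum>l<d. w l * cnj (v (Inr l))))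
      + A p * (\<Sum>l<d. (cmod (v (Inr l)))\<^sup>2))"
proof -
  define a where "a = (\<Sum>j\<in>UNIV. wirtinger sh_vec A j p * v (Inl j))"
  define b where "b = (\<Sum>l<d. w l * cnj (v (Inr l)))"
  have "herm_form UNIV (\<lambda>j k. cHess sh_prod (weighted_sqnorm A d) (Inl j) (Inl k) (p, w)) (v \<circ> Inl) =
      of_real (\<Sum>i<d. (cmod (w i))\<^sup>2) * herm_form UNIV (\<lambda>j k. cHess sh_vec A j k p) (v \<circ> Inl)"
    by (simp add: cHess_weighted_sqnorm_Inl_Inl[OF W A p] herm_form_scale)
  moreover have "herm_form {..<d} (\<lambda>l m. cHess sh_prod (weighted_sqnorm A d) (Inr l) (Inr m) (p, w)) (v \<circ> Inr) =
      of_real (A p * (\<Sum>l<d. (cmod (v (Inr l)))\<^sup>2))"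
  proof -
    have "(\<Sum>m<d. cHess sh_prod (weighted_sqnorm A d) (Inr l) (Inr m) (p, w) * v (Inr l) * cnj (v (Inr m)))
        = of_real (A p * (cmod (v (Inr l)))\<^sup>2)" if "l < d" for l
    proof -
      have "(\<Sum>m<d. cHess sh_prod (weighted_sqnorm A d) (Inr l) (Inr m) (p, w) * v (Inr l) * cnj (v (Inr m)))
          = (\<Sum>m<d. if l = m then of_real (A p) * (v (Inr l) * cnj (v (Inr l))) else 0)"
        using that by (intro sum.cong) (auto simp: cHess_weighted_sqnorm_Inr_Inr)
      then show ?thesis
        using that by (simp add: complex_norm_square del: of_real_power)
    qed
    then show ?thesis
      by (simp add: herm_form_def sum_distrib_left)
  qed
  moreover have "(\<Sum>j\<in>UNIV. \<Sum>l<d. cHess sh_prod (weighted_sqnorm A d) (Inl j) (Inr l) (p, w) * v (Inl j) * cnj (v (Inr l))) = a * b"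
    unfolding a_def b_def sum_product
    by (intro sum.cong refl) (simp add: cHess_weighted_sqnorm_Inl_Inr[OF W A p] algebra_simps)
  moreover have "(\<Sum>l<d. \<Sum>j\<in>UNIV. cHess sh_prod (weighted_sqnorm A d) (Inr l) (Inl j) (p, w) * v (Inr l) * cnj (v (Inl j)))
      = cnj b * cnj a"
    unfolding a_def b_def cnj_sum sum_product
    by (intro sum.cong refl) (simp add: cHess_weighted_sqnorm_Inr_Inl[OF W A p] algebra_simps)
  moreover have "a * b + cnj b * cnj a = of_real (2 * Re (a * b))"
    using complex_add_cnj[of "a * b"] by (simp add: mult.commute)
  ultimately show ?thesis
    unfolding herm_form_Plus[OF finite finite_lessThan] a_def b_def by (simp add: algebra_simps)
qed

lemma spsh_at_weighted_sqnorm: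
  assumes p: "p \<in> W" and log: "log_spsh_at A p" and w: "\<exists>i<d. w i \<noteq> 0"
  shows "spsh_at sh_prod (range Inl \<union> Inr ` {..<d}) (weighted_sqnorm A d) (p, w)"
proof -
  have Ap: "A p > 0"
    and disc: "\<And>\<xi>. (\<exists>j. \<xi> j \<noteq> 0) \<Longrightarrow> Im (herm_form UNIV (\<lambda>j k. cHess sh_vec A j k p) \<xi>) = 0 \<and>
      (cmod (\<Sum>j\<in>UNIV. wirtinger sh_vec A j p * \<xi> j))\<^sup>2 < A p * Re (herm_form UNIV (\<lambda>j k. cHess sh_vec A j k p) \<xi>)"
    using log unfolding log_spsh_at_def by blast+
  have I: "range Inl \<union> Inr ` {..<d} = UNIV <+> {..<d}"
    by (simp add: Plus_def)
  define B where "B = (\<Sum>i<d. (cmod (w i))\<^sup>2)"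
  have B: "B > 0"
  proof -
    obtain i where "i < d" "w i \<noteq> 0" using w by blast
    then have "0 < (cmod (w i))\<^sup>2" "(cmod (w i))\<^sup>2 \<le> B"
      unfolding B_def by (auto intro: member_le_sum)
    then show ?thesis by linarith
  qed
  show ?thesis
    unfolding spsh_at_iff_herm_form I herm_form_weighted_sqnorm[OF p] B_def[symmetric]
  proof (intro allI impI)
    fix v :: "'n + nat \<Rightarrow> complex" assume v: "\<exists>i\<in>UNIV <+> {..<d}. v i \<noteq> 0"
    define Q where "Q = herm_form UNIV (\<lambda>j k. cHess sh_vec A j k p) (v \<circ> Inl)"
    define a where "a = (\<Sum>j\<in>UNIV. wirtinger sh_vec A j p * v (Inl j))"
    define b where "b = (\<Sum>l<d. w l * cnj (v (Inr l)))"
    define N where "N = (\<Sum>l<d. (cmod (v (Inr l)))\<^sup>2)"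
    have b: "(cmod b)\<^sup>2 \<le> B * N"
      unfolding b_def B_def N_def by (rule cmod_sum_mult_cnj_power2_le)
    have "Im Q = 0 \<and> 0 < B * Re Q + 2 * Re (a * b) + A p * N"
    proof (cases "\<forall>j. v (Inl j) = 0")
      case True
      then have "Q = 0" "a = 0"
        by (simp_all add: Q_def a_def herm_form_def)
      moreover obtain l where "l < d" "v (Inr l) \<noteq> 0"
        using v True by auto
      then have "0 < (cmod (v (Inr l)))\<^sup>2" "(cmod (v (Inr l)))\<^sup>2 \<le> N"
        unfolding N_def by (auto intro: member_le_sum)
      then have "N > 0" by linarith
      ultimately show ?thesis
        using Ap by simp
    next
      case False
      then have "\<exists>j. (v \<circ> Inl) j \<noteq> 0" by simp
      from disc[OF this] have "Im Q = 0" "(cmod a)\<^sup>2 < A p * Re Q"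
        by (simp_all add: Q_def a_def o_def)
      with discriminant_pos[OF Ap B b] show ?thesis
        by simp
    qed
    then show "Im (of_real B * Q + of_real (2 * Re (a * b) + A p * N)) = 0 \<and>
        0 < Re (of_real B * Q + of_real (2 * Re (a * b) + A p * N))"
      by simp
  qed
qed

end

lemma discriminant_mult_cmod_power2_eq:
  fixes f :: real and Q \<rho> \<gamma> z :: complex
  defines "g \<equiv> (cmod z)\<^sup>2"
  defines "H \<equiv> of_real g * Q + of_real f * (\<gamma> * cnj \<gamma>) + \<rho> * cnj (cnj z * \<gamma>) + cnj z * \<gamma> * cnj \<rho>"
  shows "Im H = g * Im Q"
    and "f * g * Re H - (cmod (of_real g * \<rho> + of_real f * (cnj z * \<gamma>)))\<^sup>2 = g\<^sup>2 * (f * Re Q - (cmod \<rho>)\<^sup>2)"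
  unfolding H_def g_def by (simp_all add: cmod_power2) (simp_all add: power2_eq_square algebra_simps)

text \<open>Since \<open>log |G|\<^sup>2\<close> is pluriharmonic, the discriminant \<open>A H\<^sub>A - |\<partial>A|\<^sup>2\<close> of \<open>A = f |G|\<^sup>2\<close> is
  \<open>|G|\<^sup>4\<close> times that of \<open>f\<close>.\<close>

lemma log_spsh_at_mult_cmod_power2:
  assumes W: "open W" and f: "twice_partially_differentiable_on W f" and G: "holo_on W G"
    and p: "p \<in> W" and Gp: "G p \<noteq> 0" and log: "log_spsh_at f p"
  defines "A \<equiv> \<lambda>q. f q * (cmod (G q))\<^sup>2"
  shows "log_spsh_at A p"
proof -
  have "Im (herm_form UNIV (\<lambda>j k. cHess sh_vec A j k p) \<xi>) = 0 \<and>
      (cmod (\<Sum>j\<in>UNIV. wirtinger sh_vec A j p * \<xi> j))\<^sup>2 < A p * Re (herm_form UNIV (\<lambda>j k. cHess sh_vec A j k p) \<xi>)"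
    if "\<exists>j. \<xi> j \<noteq> 0" for \<xi>
  proof -
    define \<rho> where "\<rho> = (\<Sum>j\<in>UNIV. wirtinger sh_vec f j p * \<xi> j)"
    define \<gamma> where "\<gamma> = (\<Sum>j\<in>UNIV. cpartial G j p * \<xi> j)"
    define Q where "Q = herm_form UNIV (\<lambda>j k. cHess sh_vec f j k p) \<xi>"
    have "Im Q = 0" and "(cmod \<rho>)\<^sup>2 < f p * Re Q"
      using log that unfolding log_spsh_at_def Q_def \<rho>_def by blast+
    note g = twice_partially_differentiable_on_cmod_power2[OF G W]
    have HA: "herm_form UNIV (\<lambda>j k. cHess sh_vec A j k p) \<xi> =
        of_real ((cmod (G p))\<^sup>2) * Q + of_real (f p) * (\<gamma> * cnj \<gamma>)
        + \<rho> * cnj (cnj (G p) * \<gamma>) + cnj (G p) * \<gamma> * cnj \<rho>"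
      unfolding A_def cHess_mult[OF f g W p] cHess_cmod_power2[OF G W p] wirtinger_cmod_power2[OF G p]
      by (simp only: herm_form_add herm_form_scale herm_form_rank_one)
        (simp add: Q_def \<rho>_def \<gamma>_def sum_distrib_left mult.assoc)
    have aA: "(\<Sum>j\<in>UNIV. wirtinger sh_vec A j p * \<xi> j) =
        of_real ((cmod (G p))\<^sup>2) * \<rho> + of_real (f p) * (cnj (G p) * \<gamma>)"
      unfolding A_def wirtinger_mult[OF f g p] wirtinger_cmod_power2[OF G p]
      by (simp add: \<rho>_def \<gamma>_def sum.distrib sum_distrib_left algebra_simps)
    note eq = discriminant_mult_cmod_power2_eq[where f = "f p" and Q = Q and \<rho> = \<rho> and \<gamma> = \<gamma> and z = "G p"]
    have "0 < ((cmod (G p))\<^sup>2)\<^sup>2 * (f p * Re Q - (cmod \<rho>)\<^sup>2)"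
      using Gp \<open>(cmod \<rho>)\<^sup>2 < f p * Re Q\<close> by simp
    then show ?thesis
      unfolding HA aA using eq \<open>Im Q = 0\<close> by (simp add: A_def)
  qed
  moreover have "A p > 0"
    using log Gp by (simp add: A_def log_spsh_at_def)
  ultimately show ?thesis
    unfolding log_spsh_at_def by blast
qed

section \<open>Compactness and the main theorem\<close>

lemma compact_unit_sphere_hermitian_bounds:
  fixes L :: "'a::topological_space set" and H :: "'a \<Rightarrow> 'n::finite \<Rightarrow> 'n \<Rightarrow> complex"
    and a :: "'a \<Rightarrow> 'n \<Rightarrow> complex"
  assumes L: "compact L"
    and H: "\<And>j k. continuous_on L (\<lambda>z. H z j k)" and a: "\<And>j. continuous_on L (\<lambda>z. a z j)"
    and pos: "\<And>z \<xi>. z \<in> L \<Longrightarrow> (\<exists>j. \<xi> j \<noteq> 0) \<Longrightarrow> Re (herm_form UNIV (H z) \<xi>) > 0"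
  obtains m M where "m > 0" "M \<ge> 0"
    and "\<And>z \<eta>. z \<in> L \<Longrightarrow> \<eta> \<in> sphere 0 1 \<Longrightarrow> m \<le> Re (herm_form UNIV (H z) (vec_nth \<eta>))"
    and "\<And>z \<eta>. z \<in> L \<Longrightarrow> \<eta> \<in> sphere 0 1 \<Longrightarrow> (cmod (\<Sum>j\<in>UNIV. a z j * vec_nth \<eta> j))\<^sup>2 \<le> M"
proof (cases "L = {}")
  case True
  then show ?thesis using that[of 1 0] by simp
next
  case False
  define S where "S = L \<times> sphere (0 :: complex ^ 'n) 1"
  define Q where "Q x = Re (herm_form UNIV (H (fst x)) (vec_nth (snd x)))" for x
  define R where "R x = (cmod (\<Sum>j\<in>UNIV. a (fst x) j * vec_nth (snd x) j))\<^sup>2" for x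
  have S: "compact S"
    unfolding S_def by (intro compact_Times L compact_sphere)
  obtain z where "z \<in> L" using False by blast
  moreover have "(axis undefined 1 :: complex ^ 'n) \<in> sphere 0 1"
    by (simp add: norm_axis)
  ultimately have ne: "S \<noteq> {}"
    unfolding S_def by blast
  have nth: "continuous_on S (\<lambda>x. vec_nth (snd x) j)" for j
    by (intro continuous_on_compose2[OF bounded_linear.continuous_on[OF bounded_linear_vec_nth continuous_on_id]
        continuous_on_snd]) auto
  have Hc: "continuous_on S (\<lambda>x. H (fst x) j k)" and ac: "continuous_on S (\<lambda>x. a (fst x) j)" for j k
    by (rule continuous_on_compose2[OF H continuous_on_fst] continuous_on_compose2[OF a continuous_on_fst],
        auto simp: S_def)+
  have cQ: "continuous_on S Q"
    unfolding Q_def[abs_def] herm_form_def by (intro continuous_intros Hc nth)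
  obtain x where x: "x \<in> S" "\<And>x'. x' \<in> S \<Longrightarrow> Q x \<le> Q x'"
    using compact_attains_inf[OF compact_continuous_image[OF cQ S]] ne by auto
  have cR: "continuous_on S R"
    unfolding R_def[abs_def] by (intro continuous_intros ac nth)
  obtain y where y: "y \<in> S" "\<And>y'. y' \<in> S \<Longrightarrow> R y' \<le> R y"
    using compact_attains_sup[OF compact_continuous_image[OF cR S]] ne by auto
  obtain z \<eta> where "x = (z, \<eta>)" "z \<in> L" "norm \<eta> = 1"
    using x(1) by (auto simp: S_def)
  moreover from \<open>norm \<eta> = 1\<close> have "\<exists>j. \<eta> $ j \<noteq> 0"
    by (metis norm_zero vec_eq_iff zero_index zero_neq_one)
  ultimately have "Q x > 0"
    using pos by (simp add: Q_def)
  moreover have "R y \<ge> 0"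
    by (simp add: R_def)
  ultimately show ?thesis
    using that[of "Q x" "R y"] x(2) y(2) by (auto simp: S_def Q_def R_def)
qed

lemma compact_shift_dominates_hermitian_form:
  fixes L :: "'a::topological_space set" and f :: "'a \<Rightarrow> real" and H :: "'a \<Rightarrow> 'n::finite \<Rightarrow> 'n \<Rightarrow> complex"
    and a :: "'a \<Rightarrow> 'n \<Rightarrow> complex"
  assumes L: "compact L" and f: "continuous_on L f"
    and H: "\<And>j k. continuous_on L (\<lambda>z. H z j k)" and a: "\<And>j. continuous_on L (\<lambda>z. a z j)"
    and pos: "\<And>z \<xi>. z \<in> L \<Longrightarrow> (\<exists>j. \<xi> j \<noteq> 0) \<Longrightarrow> Re (herm_form UNIV (H z) \<xi>) > 0"
  shows "\<exists>KL>0. \<forall>K\<ge>KL. \<forall>z\<in>L. f z + K > 0 \<and> (\<forall>\<xi>. (\<exists>j. \<xi> j \<noteq> 0) \<longrightarrow>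
      (cmod (\<Sum>j\<in>UNIV. a z j * \<xi> j))\<^sup>2 < (f z + K) * Re (herm_form UNIV (H z) \<xi>))"
proof -
  obtain m M where m: "m > 0" and M: "M \<ge> 0"
    and Q: "\<And>z \<eta>. z \<in> L \<Longrightarrow> \<eta> \<in> sphere 0 1 \<Longrightarrow> m \<le> Re (herm_form UNIV (H z) (vec_nth \<eta>))"
    and R: "\<And>z \<eta>. z \<in> L \<Longrightarrow> \<eta> \<in> sphere 0 1 \<Longrightarrow> (cmod (\<Sum>j\<in>UNIV. a z j * vec_nth \<eta> j))\<^sup>2 \<le> M"
    using compact_unit_sphere_hermitian_bounds[where H = H and a = a, OF L H a pos] by blast
  obtain B where B: "\<And>z. z \<in> L \<Longrightarrow> \<bar>f z\<bar> \<le> B"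
    using compact_imp_bounded[OF compact_continuous_image[OF f L]] by (auto simp: bounded_real)
  define KL where "KL = \<bar>B\<bar> + 1 + M / m"
  show ?thesis
  proof (intro exI[of _ KL] conjI allI impI ballI)
    show "KL > 0"
      using m M by (simp add: KL_def add_pos_nonneg)
    fix K z assume "KL \<le> K" "z \<in> L"
    then have s: "f z + K \<ge> 1 + M / m"
      using B[of z] unfolding KL_def by linarith
    moreover have "M / m \<ge> 0"
      using m M by simp
    ultimately show sK: "f z + K > 0"
      by linarith
    fix \<xi> :: "'n \<Rightarrow> complex" assume "\<exists>j. \<xi> j \<noteq> 0"
    define n where "n = norm (vec_lambda \<xi>)"
    have "n > 0"
      using \<open>\<exists>j. \<xi> j \<noteq> 0\<close> by (auto simp: n_def vec_eq_iff)
    define \<eta> where "\<eta> = (1 / n) *\<^sub>R vec_lambda \<xi>"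
    have \<eta>: "\<eta> \<in> sphere 0 1"
      using \<open>n > 0\<close> by (simp add: \<eta>_def n_def)
    have \<xi>: "\<xi> = (\<lambda>j. of_real n * vec_nth \<eta> j)"
      using \<open>n > 0\<close> by (simp add: \<eta>_def fun_eq_iff) (simp add: scaleR_conv_of_real)
    have "(cmod (\<Sum>j\<in>UNIV. a z j * vec_nth \<eta> j))\<^sup>2 < (f z + K) * Re (herm_form UNIV (H z) (vec_nth \<eta>))"
    proof -
      have "(1 + M / m) * m \<le> (f z + K) * Re (herm_form UNIV (H z) (vec_nth \<eta>))"
        using s sK Q[OF \<open>z \<in> L\<close> \<eta>] m M by (intro mult_mono) auto
      moreover have "(1 + M / m) * m = m + M"
        using m by (simp add: field_simps)
      ultimately show ?thesis
        using R[OF \<open>z \<in> L\<close> \<eta>] m by linarith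
    qed
    moreover have "(\<Sum>j\<in>UNIV. a z j * \<xi> j) = of_real n * (\<Sum>j\<in>UNIV. a z j * vec_nth \<eta> j)"
      by (subst \<xi>) (simp add: sum_distrib_left algebra_simps)
    then have "(cmod (\<Sum>j\<in>UNIV. a z j * \<xi> j))\<^sup>2 = n\<^sup>2 * (cmod (\<Sum>j\<in>UNIV. a z j * vec_nth \<eta> j))\<^sup>2"
      by (simp add: norm_mult power_mult_distrib)
    ultimately show "(cmod (\<Sum>j\<in>UNIV. a z j * \<xi> j))\<^sup>2 < (f z + K) * Re (herm_form UNIV (H z) \<xi>)"
      using \<open>n > 0\<close> by (simp add: \<xi> herm_form_of_real_scale)
  qed
qed

lemma log_spsh_at_shift_on_compact:
  assumes C2: "C2_on D \<sigma>" and spsh: "\<forall>z\<in>D. spsh_at sh_vec UNIV \<sigma> z"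
    and L: "compact L" "L \<subseteq> D"
  obtains KL where "KL > 0" and "\<And>K z. KL \<le> K \<Longrightarrow> z \<in> L \<Longrightarrow> log_spsh_at (\<lambda>q. \<sigma> q + K) z"
proof -
  have pos: "Im (herm_form UNIV (\<lambda>j k. cHess sh_vec \<sigma> j k z) \<xi>) = 0 \<and> Re (herm_form UNIV (\<lambda>j k. cHess sh_vec \<sigma> j k z) \<xi>) > 0"
    if "z \<in> L" "\<exists>j. \<xi> j \<noteq> 0" for z \<xi>
    using spsh L(2) that by (simp add: spsh_at_iff_herm_form subset_iff)
  have cont: "continuous_on L \<sigma>" "continuous_on L (cHess sh_vec \<sigma> j k)" "continuous_on L (wirtinger sh_vec \<sigma> j)" for j k
    using L(2) C2_on_imp_continuous_on[OF C2] C2_on_continuous_on_cHess[OF C2] C2_on_continuous_on_wirtinger[OF C2]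
    by (meson continuous_on_subset)+
  obtain KL where "KL > 0" and KL: "\<forall>K\<ge>KL. \<forall>z\<in>L. \<sigma> z + K > 0 \<and> (\<forall>\<xi>. (\<exists>j. \<xi> j \<noteq> 0) \<longrightarrow>
      (cmod (\<Sum>j\<in>UNIV. wirtinger sh_vec \<sigma> j z * \<xi> j))\<^sup>2 < (\<sigma> z + K) * Re (herm_form UNIV (\<lambda>j k. cHess sh_vec \<sigma> j k z) \<xi>))"
    using compact_shift_dominates_hermitian_form[where H = "\<lambda>z j k. cHess sh_vec \<sigma> j k z" and a = "\<lambda>z j. wirtinger sh_vec \<sigma> j z",
        OF L(1) cont] pos by blast
  show ?thesis
  proof (rule that[OF \<open>KL > 0\<close>])
    fix K z assume "KL \<le> K" "z \<in> L"
    then show "log_spsh_at (\<lambda>q. \<sigma> q + K) z"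
      using KL pos unfolding log_spsh_at_def cHess_add_const wirtinger_add_const by blast
  qed
qed

theorem lemma3p1:
  fixes D :: "(complex ^ 'n) set" and \<sigma> :: "complex ^ 'n \<Rightarrow> real"
  assumes "open D"
    and "C2_on D \<sigma>"
    and "\<forall>z\<in>D. spsh_at sh_vec UNIV \<sigma> z"
  shows "\<forall>L. compact L \<and> L \<subseteq> D \<longrightarrow>
    (\<exists>KL>0. \<forall>d::nat. d \<ge> 1 \<longrightarrow>
       (\<forall>G :: complex ^ 'n \<Rightarrow> complex.
          (\<exists>U. open U \<and> L \<subseteq> U \<and> holo_on U G \<and> (\<forall>z\<in>U. G z \<noteq> 0)) \<longrightarrow>
          (\<forall>K::real. K \<ge> KL \<longrightarrow>
             (\<forall>z\<in>L. \<forall>w::nat \<Rightarrow> complex. (\<exists>i<d. w i \<noteq> 0) \<longrightarrow>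
                spsh_at sh_prod (range Inl \<union> Inr ` {..<d})
                  (\<lambda>(z', w'). (\<sigma> z' + K) * (cmod (G z'))\<^sup>2 * (\<Sum>i<d. (cmod (w' i))\<^sup>2))
                  (z, w)))))"
proof (intro allI impI)
  fix L assume L: "compact L \<and> L \<subseteq> D"
  then obtain KL where "KL > 0" and KL: "\<And>K z. KL \<le> K \<Longrightarrow> z \<in> L \<Longrightarrow> log_spsh_at (\<lambda>q. \<sigma> q + K) z"
    using log_spsh_at_shift_on_compact[OF assms(2,3)] by blast
  show "\<exists>KL>0. \<forall>d::nat. d \<ge> 1 \<longrightarrow> (\<forall>G. (\<exists>U. open U \<and> L \<subseteq> U \<and> holo_on U G \<and> (\<forall>z\<in>U. G z \<noteq> 0)) \<longrightarrow>
      (\<forall>K\<ge>KL. \<forall>z\<in>L. \<forall>w. (\<exists>i<d. w i \<noteq> 0) \<longrightarrow> spsh_at sh_prod (range Inl \<union> Inr ` {..<d})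
        (\<lambda>(z', w'). (\<sigma> z' + K) * (cmod (G z'))\<^sup>2 * (\<Sum>i<d. (cmod (w' i))\<^sup>2)) (z, w)))"
  proof (intro exI[of _ KL] conjI \<open>KL > 0\<close> allI impI ballI)
    fix d :: nat and G K z and w :: "nat \<Rightarrow> complex"
    assume "\<exists>U. open U \<and> L \<subseteq> U \<and> holo_on U G \<and> (\<forall>z\<in>U. G z \<noteq> 0)" and "KL \<le> K" and "z \<in> L"
      and w: "\<exists>i<d. w i \<noteq> 0"
    then obtain U where U: "open U" "L \<subseteq> U" "holo_on U G" "\<forall>z\<in>U. G z \<noteq> 0" by blast
    have W: "open (D \<inter> U)" "z \<in> D \<inter> U" and G: "holo_on (D \<inter> U) G"
      using assms(1) U \<open>z \<in> L\<close> L holo_on_subset[OF U(3)] by auto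
    have f: "twice_partially_differentiable_on (D \<inter> U) (\<lambda>q. \<sigma> q + K)"
      using twice_partially_differentiable_on_add_const[OF C2_on_imp_twice_partially_differentiable_on[OF assms(2)]]
      by (rule twice_partially_differentiable_on_subset) blast
    have "log_spsh_at (\<lambda>q. (\<sigma> q + K) * (cmod (G q))\<^sup>2) z"
      using log_spsh_at_mult_cmod_power2[OF W(1) f G W(2)] KL[OF \<open>KL \<le> K\<close> \<open>z \<in> L\<close>] U(4) W(2) by auto
    from spsh_at_weighted_sqnorm[OF W(1) twice_partially_differentiable_on_mult[OF f
        twice_partially_differentiable_on_cmod_power2[OF G W(1)] W(1)] W(2) this w]
    show "spsh_at sh_prod (range Inl \<union> Inr ` {..<d})
        (\<lambda>(z', w'). (\<sigma> z' + K) * (cmod (G z'))\<^sup>2 * (\<Sum>i<d. (cmod (w' i))\<^sup>2)) (z, w)"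
      by (simp add: weighted_sqnorm_def)
  qed
qed

end
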